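(* Let $(x^*,y^* )$ be an optimal solution of the LP relaxation of forest cover on $(G,w)$, $G^*$ the subgraph with vertex set $\{i:x^*_i>0\}$ and edge set $\{(i,j):y^*_{ij}>0\}$, and $C=(V_C,E_C)$ any connected component of $G^*$ with at least one edge. Let $M$ be a minimum spanning tree of $C$ (w.r.t. $w$) computed by Kruskal's algorithm and $T=(V_T,E_T)$ the tree obtained from $M$ by deleting every degree-one vertex $i$ of $M$ with $x^*_i<1/2$ together with its incident edge. Then $$\sum_{i\in V_C}x^*_i-\sum_{(i,j)\in E_C}y^*_{ij}(1-w_{ij})\;\ge\;\frac12\Big[|V_T|-\sum_{(i,j)\in E_T}(1-w_{ij})\Big].$$
   Context: Graph $G=(V,E)$ with edge weights $w:E\to[0,1]$. For $S\subseteq V$, $E(S)$ denotes the edges with both endpoints in $S$. The LP relaxation of forest cover: minimize $\sum_{i\in V}x_i-\sum_{(i,j)\in E}y_{ij}(1-w_{ij})$ subject to $x_i+x_j\ge1$ and $x_i\ge y_{ij}$, $x_j\ge y_{ij}$ for all $(i,j)\in E$; $\sum_{i\in S}x_i-\sum_{(i,j)\in E(S)}y_{ij}\ge1$ for all $S\subseteq V$ with $E(S)\ne\emptyset$; $0\le x,y\le1$. *)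

theory Defs
  imports Complex_Main
begin

definition graph :: "'a set \<Rightarrow> 'a set set \<Rightarrow> bool" where
  "graph V E \<longleftrightarrow> finite V \<and> (\<forall>e\<in>E. \<exists>i j. i \<noteq> j \<and> e = {i, j} \<and> i \<in> V \<and> j \<in> V)"

definition induced_edges :: "'a set set \<Rightarrow> 'a set \<Rightarrow> 'a set set" where
  "induced_edges E S = {e \<in> E. e \<subseteq> S}"

definition fc_feasible :: "'a set \<Rightarrow> 'a set set \<Rightarrow> ('a \<Rightarrow> real) \<Rightarrow> ('a set \<Rightarrow> real) \<Rightarrow> bool" where
  "fc_feasible V E x y \<longleftrightarrow>
     (\<forall>i j. {i, j} \<in> E \<longrightarrow> x i + x j \<ge> 1 \<and> x i \<ge> y {i, j} \<and> x j \<ge> y {i, j}) \<and>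
     (\<forall>S. S \<subseteq> V \<and> induced_edges E S \<noteq> {} \<longrightarrow>
          (\<Sum>i\<in>S. x i) - (\<Sum>e\<in>induced_edges E S. y e) \<ge> 1) \<and>
     (\<forall>i\<in>V. 0 \<le> x i \<and> x i \<le> 1) \<and>
     (\<forall>e\<in>E. 0 \<le> y e \<and> y e \<le> 1)"

definition fc_objective :: "'a set \<Rightarrow> 'a set set \<Rightarrow> ('a set \<Rightarrow> real) \<Rightarrow> ('a \<Rightarrow> real) \<Rightarrow> ('a set \<Rightarrow> real) \<Rightarrow> real" where
  "fc_objective V E w x y = (\<Sum>i\<in>V. x i) - (\<Sum>e\<in>E. y e * (1 - w e))"

definition fc_optimal :: "'a set \<Rightarrow> 'a set set \<Rightarrow> ('a set \<Rightarrow> real) \<Rightarrow> ('a \<Rightarrow> real) \<Rightarrow> ('a set \<Rightarrow> real) \<Rightarrow> bool" where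
  "fc_optimal V E w x y \<longleftrightarrow> fc_feasible V E x y \<and>
     (\<forall>x' y'. fc_feasible V E x' y' \<longrightarrow> fc_objective V E w x y \<le> fc_objective V E w x' y')"

definition adj :: "'a set set \<Rightarrow> 'a \<Rightarrow> 'a \<Rightarrow> bool" where
  "adj E u v \<longleftrightarrow> u \<noteq> v \<and> {u, v} \<in> E"

definition connected_comp :: "'a set \<Rightarrow> 'a set set \<Rightarrow> 'a set \<Rightarrow> bool" where
  "connected_comp V E C \<longleftrightarrow> (\<exists>u\<in>V. C = {v \<in> V. (adj E)\<^sup>*\<^sup>* u v})"

definition connected_on :: "'a set \<Rightarrow> 'a set set \<Rightarrow> bool" where
  "connected_on V F \<longleftrightarrow> (\<forall>u\<in>V. \<forall>v\<in>V. (adj F)\<^sup>*\<^sup>* u v)"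

definition is_cycle :: "'a set set \<Rightarrow> 'a list \<Rightarrow> bool" where
  "is_cycle F cs \<longleftrightarrow> length cs \<ge> 3 \<and> distinct cs \<and>
     (\<forall>k. Suc k < length cs \<longrightarrow> adj F (cs ! k) (cs ! Suc k)) \<and>
     adj F (last cs) (hd cs)"

definition acyclic_edges :: "'a set set \<Rightarrow> bool" where
  "acyclic_edges F \<longleftrightarrow> (\<nexists>cs. is_cycle F cs)"

definition spanning_tree :: "'a set \<Rightarrow> 'a set set \<Rightarrow> 'a set set \<Rightarrow> bool" where
  "spanning_tree VC EC F \<longleftrightarrow> F \<subseteq> EC \<and> connected_on VC F \<and> acyclic_edges F"

definition min_spanning_tree :: "'a set \<Rightarrow> 'a set set \<Rightarrow> ('a set \<Rightarrow> real) \<Rightarrow> 'a set set \<Rightarrow> bool" where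
  "min_spanning_tree VC EC w M \<longleftrightarrow> spanning_tree VC EC M \<and>
     (\<forall>F. spanning_tree VC EC F \<longrightarrow> (\<Sum>e\<in>M. w e) \<le> (\<Sum>e\<in>F. w e))"

definition degree :: "'a set set \<Rightarrow> 'a \<Rightarrow> nat" where
  "degree F i = card {e \<in> F. i \<in> e}"

end

theory Submission
  imports Defs "HOL-Library.Transitive_Closure_Table" "HOL-Analysis.Henstock_Kurzweil_Integration"
begin

text \<open>Root M at a vertex r with x r \<ge> 1/2; one exists because x i + x j \<ge> 1 on every
edge. For a threshold t, the edges of M lighter than t form a forest whose components are the
branches hanging from the tops: r and every vertex whose parent edge has weight at least t.
By the cycle property of minimum spanning trees every edge of C lighter than t lies inside a
single branch, so the LP values of the branches (the left-hand sides of their subset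
constraints, counting light edges only) sum to at most the sum of x over C minus the sum of y
over the light edges of C. A branch
containing an edge has value at least 1. A singleton branch {z} with z \<notin> L and x z < 1/2
has a child c at the top of its own branch, and the subset constraint for {z} \<union> branch c
pays 1 for both. Hence the branch values sum to at least half the number of tops outside L,
which is at least |V_T| - |{e \<in> E_T. w e < t}|. Integrating over t \<in> [0,1] turns the
indicator of w e < t into 1 - w e.\<close>

section \<open>Walks, cycles and minimum spanning trees\<close>

lemma symp_adj: "symp (adj H)"
  by (auto simp: adj_def insert_commute intro: sympI)

lemma adj_sym: "adj H u v \<Longrightarrow> adj H v u"
  using symp_adj by (rule sympD)

lemma adj_rtranclp_sym: "(adj H)\<^sup>*\<^sup>* u v \<Longrightarrow> (adj H)\<^sup>*\<^sup>* v u"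
  using sympD[OF symp_rtranclp[OF symp_adj]] .

lemma adj_mono: "H \<subseteq> H' \<Longrightarrow> adj H u v \<Longrightarrow> adj H' u v"
  by (auto simp: adj_def)

lemma adj_rtranclp_mono: "H \<subseteq> H' \<Longrightarrow> (adj H)\<^sup>*\<^sup>* u v \<Longrightarrow> (adj H')\<^sup>*\<^sup>* u v"
  by (metis adj_mono mono_rtranclp)

lemma adj_rtranclp_avoiding_vertex:
  "(adj {e \<in> H. u \<notin> e})\<^sup>*\<^sup>* a b \<Longrightarrow> u \<in> f \<Longrightarrow> (adj (H - {f}))\<^sup>*\<^sup>* a b"
  by (rule adj_rtranclp_mono[rotated]) auto

lemma rtrancl_path_nth:
  "rtrancl_path r x xs y \<Longrightarrow> Suc k < length (x # xs) \<Longrightarrow> r ((x # xs) ! k) ((x # xs) ! Suc k)"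
proof (induction arbitrary: k rule: rtrancl_path.induct)
  case (step x y ys z)
  then show ?case by (cases k) auto
qed simp

lemma acyclic_edges_no_detour:
  assumes "acyclic_edges H" and "{u, v} \<in> H" and "u \<noteq> v"
    and "(adj (H - {{u, v}}))\<^sup>*\<^sup>* v u"
  shows False
proof -
  from assms(4) obtain xs where path: "rtrancl_path (adj (H - {{u, v}})) v xs u" and "distinct (v # xs)"
    by (metis rtranclp_eq_rtrancl_path rtrancl_path_distinct)
  have last: "last (v # xs) = u"
    using path by (induction rule: rtrancl_path.induct) auto
  then have "xs \<noteq> []" using \<open>u \<noteq> v\<close> by auto
  have "length xs \<noteq> 1"
  proof
    assume "length xs = 1"
    then obtain a where "xs = [a]" by (auto simp: length_Suc_conv)
    then have "adj (H - {{u, v}}) v u" using path by (auto elim: rtrancl_path.cases)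
    then show False by (auto simp: adj_def insert_commute)
  qed
  have "is_cycle H (v # xs)"
    unfolding is_cycle_def
  proof (intro conjI allI impI)
    show "3 \<le> length (v # xs)" using \<open>xs \<noteq> []\<close> \<open>length xs \<noteq> 1\<close> by (cases "length xs") auto
    show "distinct (v # xs)" by fact
    show "adj H ((v # xs) ! k) ((v # xs) ! Suc k)" if "Suc k < length (v # xs)" for k
      using rtrancl_path_nth[OF path that] adj_mono[of "H - {{u, v}}" H] by blast
    show "adj H (last (v # xs)) (hd (v # xs))"
      using last assms(2,3) by (simp add: adj_def)
  qed
  then show False using assms(1) by (auto simp: acyclic_edges_def)
qed

lemma adj_rtranclp_Diff_edge:
  assumes "(adj (H - {{p, q}}))\<^sup>*\<^sup>* p q" and "(adj H)\<^sup>*\<^sup>* a b"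
  shows "(adj (H - {{p, q}}))\<^sup>*\<^sup>* a b"
  using assms(2)
proof (induction rule: rtranclp_induct)
  case (step b c)
  show ?case
  proof (cases "{b, c} = {p, q}")
    case True
    then have "(adj (H - {{p, q}}))\<^sup>*\<^sup>* b c"
      using assms(1) adj_rtranclp_sym[OF assms(1)] by (auto simp: doubleton_eq_iff)
    then show ?thesis using step.IH by (metis rtranclp_trans)
  next
    case False
    then have "adj (H - {{p, q}}) b c" using step.hyps(2) by (auto simp: adj_def)
    then show ?thesis using step.IH by (metis rtranclp.rtrancl_into_rtrancl)
  qed
qed simp

lemma adj_rtranclp_split_edge:
  assumes "(adj H)\<^sup>*\<^sup>* p z"
  shows "(adj (H - {{p, q}}))\<^sup>*\<^sup>* p z \<or> (adj (H - {{p, q}}))\<^sup>*\<^sup>* q z"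
  using assms
proof (induction rule: rtranclp_induct)
  case (step b c)
  show ?case
  proof (cases "{b, c} = {p, q}")
    case True
    then show ?thesis by (auto simp: doubleton_eq_iff)
  next
    case False
    then have "adj (H - {{p, q}}) b c" using step.hyps(2) by (auto simp: adj_def)
    then show ?thesis using step.IH by (metis rtranclp.rtrancl_into_rtrancl)
  qed
qed simp

lemma is_cycle_detour:
  assumes cycle: "is_cycle H cs"
  shows "(adj (H - {{cs ! 0, cs ! 1}}))\<^sup>*\<^sup>* (cs ! 0) (cs ! 1)"
proof -
  let ?H = "H - {{cs ! 0, cs ! 1}}"
  have len: "3 \<le> length cs" and dist: "distinct cs"
    and step: "\<And>k. Suc k < length cs \<Longrightarrow> adj H (cs ! k) (cs ! Suc k)"
    and close: "adj H (last cs) (hd cs)"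
    using cycle by (auto simp: is_cycle_def)
  have ne: "cs ! i \<noteq> cs ! j" if "i < length cs" "j < i" for i j
    using dist that by (simp add: nth_eq_iff_index_eq)
  have walk: "(adj ?H)\<^sup>*\<^sup>* (cs ! 1) (cs ! k)" if "1 \<le> k" "k < length cs" for k
    using that
  proof (induction k)
    case (Suc k)
    show ?case
    proof (cases "k = 0")
      case False
      have "cs ! Suc k \<noteq> cs ! 0" "cs ! Suc k \<noteq> cs ! 1"
        using ne[OF Suc.prems(2), of 0] ne[OF Suc.prems(2), of 1] False by auto
      then have "{cs ! k, cs ! Suc k} \<noteq> {cs ! 0, cs ! 1}" by auto
      then have "adj ?H (cs ! k) (cs ! Suc k)" using step[OF Suc.prems(2)] by (auto simp: adj_def)
      moreover have "(adj ?H)\<^sup>*\<^sup>* (cs ! 1) (cs ! k)" using Suc.IH False Suc.prems by simp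
      ultimately show ?thesis by (simp add: rtranclp.rtrancl_into_rtrancl)
    qed simp
  qed simp
  have "cs \<noteq> []" using len by auto
  then have last: "last cs = cs ! (length cs - 1)" and hd: "hd cs = cs ! 0"
    by (simp_all add: last_conv_nth hd_conv_nth)
  have "{last cs, hd cs} \<noteq> {cs ! 0, cs ! 1}"
    using ne[of "length cs - 1" 0] ne[of "length cs - 1" 1] len unfolding last hd
    by (auto simp: doubleton_eq_iff)
  then have "adj ?H (last cs) (cs ! 0)" using close hd by (auto simp: adj_def)
  moreover have "(adj ?H)\<^sup>*\<^sup>* (cs ! 1) (last cs)" using walk[of "length cs - 1"] len last by simp
  ultimately show ?thesis
    by (metis adj_rtranclp_sym rtranclp.rtrancl_into_rtrancl)
qed

lemma connected_on_spanning_tree_le: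
  fixes w :: "'a set \<Rightarrow> real"
  assumes "finite H" "H \<subseteq> EC" "connected_on VC H" "\<forall>e\<in>EC. 0 \<le> w e"
  shows "\<exists>F. spanning_tree VC EC F \<and> sum w F \<le> sum w H"
  using assms
proof (induction "card H" arbitrary: H rule: less_induct)
  case less
  show ?case
  proof (cases "acyclic_edges H")
    case True
    then show ?thesis using less.prems unfolding spanning_tree_def by auto
  next
    case False
    then obtain cs where cycle: "is_cycle H cs" by (auto simp: acyclic_edges_def)
    define f where "f = {cs ! 0, cs ! 1}"
    have "f \<in> H" using cycle by (auto simp: is_cycle_def adj_def f_def)
    have "connected_on VC (H - {f})"
      using less.prems(3) adj_rtranclp_Diff_edge[OF is_cycle_detour[OF cycle]]
      by (auto simp: connected_on_def f_def)
    moreover have "card (H - {f}) < card H" using \<open>f \<in> H\<close> less.prems(1) by (metis card_Diff1_less)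
    ultimately obtain F where "spanning_tree VC EC F" "sum w F \<le> sum w (H - {f})"
      using less.hyps[of "H - {f}"] less.prems by blast
    moreover have "sum w (H - {f}) = sum w H - w f" using \<open>f \<in> H\<close> less.prems(1) by (simp add: sum_diff1)
    moreover have "0 \<le> w f" using \<open>f \<in> H\<close> less.prems by auto
    ultimately show ?thesis by auto
  qed
qed

lemma adj_rtranclp_exit_edge:
  assumes "(adj H)\<^sup>*\<^sup>* v z" and "z \<in> R" and "v \<notin> R"
  shows "\<exists>p q. {p, q} \<in> H \<and> p \<in> R \<and> q \<notin> R \<and> (adj (H - {{p, q}}))\<^sup>*\<^sup>* v q"
  using assms
proof (induction rule: converse_rtranclp_induct)
  case (step a b)
  show ?case
  proof (cases "b \<in> R")
    case True
    have "{b, a} \<in> H" using step.hyps(1) by (auto simp: adj_def insert_commute)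
    then show ?thesis using True step.prems by blast
  next
    case False
    then obtain p q where pq: "{p, q} \<in> H" "p \<in> R" "q \<notin> R" "(adj (H - {{p, q}}))\<^sup>*\<^sup>* b q"
      using step.IH step.prems by blast
    have "{a, b} \<noteq> {p, q}" using pq(2) step.prems False by (auto simp: doubleton_eq_iff)
    then have "adj (H - {{p, q}}) a b" using step.hyps(1) by (auto simp: adj_def)
    then show ?thesis using pq by (metis converse_rtranclp_into_rtranclp)
  qed
qed simp

lemma min_spanning_tree_cycle_property:
  fixes w :: "'a set \<Rightarrow> real"
  assumes mst: "min_spanning_tree VC EC w M"
    and EC: "finite EC" "\<forall>e\<in>EC. e \<subseteq> VC \<and> 0 \<le> w e"
    and e: "{u, v} \<in> EC" "u \<noteq> v" "w {u, v} < t"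
  shows "(adj {f \<in> M. w f < t})\<^sup>*\<^sup>* u v"
proof (rule ccontr)
  define R where "R = {z. (adj {f \<in> M. w f < t})\<^sup>*\<^sup>* u z}"
  assume "\<not> (adj {f \<in> M. w f < t})\<^sup>*\<^sup>* u v"
  then have "v \<notin> R" by (simp add: R_def)
  have M: "M \<subseteq> EC" "connected_on VC M"
    using mst by (auto simp: min_spanning_tree_def spanning_tree_def)
  have "u \<in> VC" "v \<in> VC" using e(1) EC(2) by blast+
  then have vu: "(adj M)\<^sup>*\<^sup>* v u" using M(2) by (simp add: connected_on_def)
  have "u \<in> R" by (simp add: R_def)
  then obtain p q where pq: "{p, q} \<in> M" "p \<in> R" "q \<notin> R" and vq: "(adj (M - {{p, q}}))\<^sup>*\<^sup>* v q"
    using adj_rtranclp_exit_edge[OF vu _ \<open>v \<notin> R\<close>] by blast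
  have "p \<noteq> q" using pq(2,3) by blast
  have heavy: "t \<le> w {p, q}"
  proof (rule ccontr)
    assume "\<not> t \<le> w {p, q}"
    then have "adj {f \<in> M. w f < t} p q" using pq(1) \<open>p \<noteq> q\<close> by (simp add: adj_def)
    then show False using pq(2,3) by (auto simp: R_def intro: rtranclp.rtrancl_into_rtrancl)
  qed
  have "{u, v} \<notin> M"
  proof
    assume "{u, v} \<in> M"
    then have "adj {f \<in> M. w f < t} u v" using e by (simp add: adj_def)
    then show False using \<open>v \<notin> R\<close> by (simp add: R_def r_into_rtranclp)
  qed
  \<comment> \<open>Exchanging the heavy edge {p, q} for {u, v} gives a lighter connected subgraph.\<close>
  define M' where "M' = insert {u, v} (M - {{p, q}})"
  have "{f \<in> M. w f < t} \<subseteq> M'" using heavy by (auto simp: M'_def)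
  then have "(adj M')\<^sup>*\<^sup>* u p" using pq(2) adj_rtranclp_mono by (auto simp: R_def)
  then have "(adj M')\<^sup>*\<^sup>* p u" by (rule adj_rtranclp_sym)
  moreover have "(adj M')\<^sup>*\<^sup>* v q" using adj_rtranclp_mono[of "M - {{p, q}}" M'] vq
    by (auto simp: M'_def)
  then have "(adj M')\<^sup>*\<^sup>* u q" using e(2)
    by (auto simp: M'_def adj_def intro: converse_rtranclp_into_rtranclp)
  ultimately have pq': "(adj M')\<^sup>*\<^sup>* p q" by (rule rtranclp_trans)
  have from_p: "(adj M')\<^sup>*\<^sup>* p a" if "a \<in> VC" for a
  proof -
    have "p \<in> VC" using pq(1) M(1) EC(2) by blast
    then have "(adj M)\<^sup>*\<^sup>* p a" using M(2) that by (simp add: connected_on_def)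
    then have "(adj (M - {{p, q}}))\<^sup>*\<^sup>* p a \<or> (adj (M - {{p, q}}))\<^sup>*\<^sup>* q a"
      by (rule adj_rtranclp_split_edge)
    moreover have sub: "M - {{p, q}} \<subseteq> M'" by (auto simp: M'_def)
    ultimately have "(adj M')\<^sup>*\<^sup>* p a \<or> (adj M')\<^sup>*\<^sup>* q a"
      using adj_rtranclp_mono[OF sub, of p a] adj_rtranclp_mono[OF sub, of q a] by blast
    then show ?thesis using rtranclp_trans[OF pq'] by blast
  qed
  have "connected_on VC M'"
    unfolding connected_on_def using rtranclp_trans[OF adj_rtranclp_sym[OF from_p] from_p] by blast
  moreover have "M' \<subseteq> EC" using M(1) e(1) unfolding M'_def by blast
  moreover have "finite M'" using \<open>M' \<subseteq> EC\<close> EC(1) by (rule finite_subset)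
  ultimately obtain F where F: "spanning_tree VC EC F" "sum w F \<le> sum w M'"
    using connected_on_spanning_tree_le[of M' EC VC w] EC(2) by blast
  have "finite M" using M(1) EC(1) by (rule finite_subset)
  then have "sum w M' = w {u, v} + sum w M - w {p, q}"
    using \<open>{u, v} \<notin> M\<close> pq(1) by (simp add: M'_def sum_diff1)
  then have "sum w F < sum w M" using F(2) heavy e(3) by simp
  then show False using F(1) mst by (auto simp: min_spanning_tree_def)
qed

section \<open>Rooted trees and their branches\<close>

locale rooted_tree =
  fixes U :: "'a set" and T :: "'a set set" and r :: 'a
  assumes graph: "graph U T" and connected: "connected_on U T"
    and acyclic: "acyclic_edges T" and root: "r \<in> U"
begin

lemma finite_edges: "finite T"
proof -
  have "T \<subseteq> Pow U" using graph by (auto simp: graph_def)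
  then show ?thesis using graph by (auto simp: graph_def intro: finite_subset)
qed

lemma adj_in_vertices: "adj T u v \<Longrightarrow> u \<in> U \<and> v \<in> U"
  using graph by (auto simp: adj_def graph_def doubleton_eq_iff)

lemma adj_rtranclp_in_vertices: "(adj F)\<^sup>*\<^sup>* a b \<Longrightarrow> F \<subseteq> T \<Longrightarrow> a \<in> U \<Longrightarrow> b \<in> U"
  by (induction rule: rtranclp_induct) (auto dest: adj_mono adj_in_vertices)

definition depth :: "'a \<Rightarrow> nat" where
  "depth z = (LEAST n. (adj T ^^ n) r z)"

lemma depth_relpowp: "z \<in> U \<Longrightarrow> (adj T ^^ depth z) r z"
  unfolding depth_def
  by (rule LeastI_ex) (use connected root in \<open>auto simp: connected_on_def rtranclp_power\<close>)

lemma depth_le: "(adj T ^^ n) r z \<Longrightarrow> depth z \<le> n"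
  unfolding depth_def by (rule Least_le)

lemma depth_root: "depth r = 0"
  using depth_le[of 0 r] by simp

lemma depth_eq_0: "z \<in> U \<Longrightarrow> depth z = 0 \<Longrightarrow> z = r"
  using depth_relpowp by fastforce

lemma depth_adj_le:
  assumes "adj T a b" shows "depth b \<le> Suc (depth a)"
proof -
  have "(adj T ^^ Suc (depth a)) r b"
    using depth_relpowp[of a] adj_in_vertices[OF assms] assms by (auto intro: relpowp_Suc_I)
  then show ?thesis by (rule depth_le)
qed

lemma depth_Suc_E:
  assumes "z \<in> U" "depth z = Suc n"
  obtains p where "adj T p z" "depth p = n"
proof -
  obtain p where p: "(adj T ^^ n) r p" "adj T p z"
    using depth_relpowp[OF assms(1)] assms(2) by (metis relpowp_Suc_E)
  then have "depth p = n" using depth_le[OF p(1)] depth_adj_le[OF p(2)] assms(2) by simp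
  with p(2) show thesis by (rule that)
qed

text \<open>A shortest path from the root to v only visits vertices of depth less than depth v.\<close>
lemma root_path_avoiding:
  "v \<in> U \<Longrightarrow> u \<noteq> v \<Longrightarrow> depth v \<le> depth u \<Longrightarrow> (adj {e \<in> T. u \<notin> e})\<^sup>*\<^sup>* r v"
proof (induction "depth v" arbitrary: v)
  case 0
  then show ?case using depth_eq_0 by fastforce
next
  case (Suc n)
  obtain p where p: "adj T p v" "depth p = n" using depth_Suc_E Suc.prems(1) Suc.hyps(2)[symmetric] by metis
  then have "p \<noteq> u" using Suc.hyps(2) Suc.prems(3) by auto
  moreover have "p \<in> U" using p(1) adj_in_vertices by blast
  ultimately have "(adj {e \<in> T. u \<notin> e})\<^sup>*\<^sup>* r p"
    using Suc.hyps(1)[of p] p(2) Suc.hyps(2) Suc.prems(3) by simp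
  moreover have "adj {e \<in> T. u \<notin> e} p v" using p(1) \<open>p \<noteq> u\<close> Suc.prems(2) by (auto simp: adj_def)
  ultimately show ?case by (rule rtranclp.rtrancl_into_rtrancl)
qed

lemma adj_depth_neq:
  assumes "adj T c a" shows "depth a \<noteq> depth c"
proof
  assume eq: "depth a = depth c"
  have "c \<in> U" "a \<in> U" "c \<noteq> a" using assms adj_in_vertices by (auto simp: adj_def)
  then have "(adj {e \<in> T. a \<notin> e})\<^sup>*\<^sup>* r c" "(adj {e \<in> T. c \<notin> e})\<^sup>*\<^sup>* r a"
    using root_path_avoiding[of c a] root_path_avoiding[of a c] eq by auto
  then have "(adj (T - {{c, a}}))\<^sup>*\<^sup>* r c" "(adj (T - {{c, a}}))\<^sup>*\<^sup>* r a"
    by (simp_all add: adj_rtranclp_avoiding_vertex)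
  then have "(adj (T - {{c, a}}))\<^sup>*\<^sup>* a c" by (metis adj_rtranclp_sym rtranclp_trans)
  moreover have "{c, a} \<in> T" using assms by (simp add: adj_def)
  ultimately show False using acyclic_edges_no_detour[OF acyclic _ \<open>c \<noteq> a\<close>] by blast
qed

lemma lower_neighbour_unique:
  assumes ac: "adj T a c" and bc: "adj T b c" and "depth a < depth c" "depth b < depth c"
  shows "a = b"
proof (rule ccontr)
  assume "a \<noteq> b"
  have "c \<in> U" "a \<in> U" "b \<in> U" "c \<noteq> a" "c \<noteq> b"
    using ac bc adj_in_vertices by (auto simp: adj_def)
  then have "(adj {e \<in> T. c \<notin> e})\<^sup>*\<^sup>* r a" "(adj {e \<in> T. c \<notin> e})\<^sup>*\<^sup>* r b"
    using root_path_avoiding assms by auto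
  then have "(adj (T - {{c, a}}))\<^sup>*\<^sup>* r a" "(adj (T - {{c, a}}))\<^sup>*\<^sup>* r b"
    by (auto intro: adj_rtranclp_avoiding_vertex)
  moreover have "adj (T - {{c, a}}) b c"
    using bc \<open>a \<noteq> b\<close> by (auto simp: adj_def doubleton_eq_iff)
  ultimately have "(adj (T - {{c, a}}))\<^sup>*\<^sup>* a c"
    by (metis adj_rtranclp_sym rtranclp_trans rtranclp.rtrancl_into_rtrancl)
  moreover have "{c, a} \<in> T" using ac by (simp add: adj_def insert_commute)
  ultimately show False using acyclic_edges_no_detour[OF acyclic _ \<open>c \<noteq> a\<close>] by blast
qed

definition parent :: "'a \<Rightarrow> 'a" where
  "parent z = (SOME p. adj T p z \<and> depth p < depth z)"

definition parent_edge :: "'a \<Rightarrow> 'a set" where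
  "parent_edge z = {z, parent z}"

lemma parent: "z \<in> U \<Longrightarrow> z \<noteq> r \<Longrightarrow> adj T (parent z) z \<and> depth (parent z) < depth z"
proof -
  assume "z \<in> U" "z \<noteq> r"
  then obtain n where "depth z = Suc n" using depth_eq_0 not0_implies_Suc by blast
  then obtain p where "adj T p z" "depth p < depth z" using depth_Suc_E \<open>z \<in> U\<close> by (metis lessI)
  then show ?thesis unfolding parent_def by (intro someI) auto
qed

lemma parent_unique:
  assumes "adj T p z" "depth p < depth z" shows "parent z = p"
proof -
  have "z \<in> U" "z \<noteq> r" using assms adj_in_vertices depth_root by auto
  then show ?thesis using parent lower_neighbour_unique assms by blast
qed

lemma parent_edge_in_tree: "z \<in> U \<Longrightarrow> z \<noteq> r \<Longrightarrow> parent_edge z \<in> T"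
  using parent by (auto simp: parent_edge_def adj_def insert_commute)

lemma inj_on_parent_edge: "inj_on parent_edge (U - {r})"
proof (rule inj_onI)
  fix z1 z2 assume z: "z1 \<in> U - {r}" "z2 \<in> U - {r}" "parent_edge z1 = parent_edge z2"
  show "z1 = z2"
  proof (rule ccontr)
    assume "z1 \<noteq> z2"
    then have "z1 = parent z2" "z2 = parent z1" using z(3) by (auto simp: parent_edge_def doubleton_eq_iff)
    moreover have "depth (parent z1) < depth z1" "depth (parent z2) < depth z2" using parent z(1,2) by auto
    ultimately show False by simp
  qed
qed

lemma child_exists:
  assumes z: "z \<in> U" "z \<noteq> r" "degree T z \<noteq> 1"
  obtains c where "adj T z c" "depth z < depth c"
proof -
  have "{e \<in> T. z \<in> e} \<noteq> {parent_edge z}"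
  proof
    assume "{e \<in> T. z \<in> e} = {parent_edge z}"
    then show False using z(3) by (simp add: degree_def)
  qed
  moreover have "parent_edge z \<in> {e \<in> T. z \<in> e}"
    using parent_edge_in_tree[OF z(1,2)] by (simp add: parent_edge_def)
  ultimately obtain e where e: "e \<in> T" "z \<in> e" "e \<noteq> parent_edge z" by blast
  obtain i j where "i \<noteq> j" "e = {i, j}" using graph e(1) unfolding graph_def by blast
  then obtain c where c: "e = {z, c}" "c \<noteq> z" using e(2) by (cases "z = i") auto
  have zc: "adj T z c" using e(1) c by (simp add: adj_def)
  have "parent z \<noteq> c" using e(3) c(1) by (auto simp: parent_edge_def)
  then have "\<not> depth c < depth z" using parent_unique[OF adj_sym[OF zc]] by blast
  then have "depth z < depth c" using adj_depth_neq[OF zc] by simp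
  then show thesis using zc that by blast
qed

lemma degree_parent:
  assumes z: "z \<in> U" "z \<noteq> r" and "parent z \<noteq> r"
  shows "degree T (parent z) \<noteq> 1"
proof -
  let ?p = "parent z"
  have "?p \<in> U" using parent z adj_in_vertices by blast
  have "depth (parent ?p) < depth ?p" "depth ?p < depth z" using parent z \<open>?p \<in> U\<close> assms(3) by auto
  then have "parent_edge ?p \<noteq> parent_edge z" by (auto simp: parent_edge_def doubleton_eq_iff)
  moreover have "parent_edge ?p \<in> {e \<in> T. ?p \<in> e}" "parent_edge z \<in> {e \<in> T. ?p \<in> e}"
    using parent_edge_in_tree z \<open>?p \<in> U\<close> assms(3) by (auto simp: parent_edge_def)
  moreover have "card {parent_edge ?p, parent_edge z} \<le> card {e \<in> T. ?p \<in> e}"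
    using calculation(2,3) finite_edges by (intro card_mono) auto
  ultimately show ?thesis by (simp add: degree_def)
qed

definition tops :: "'a set set \<Rightarrow> 'a set" where
  "tops F = {z \<in> U. z = r \<or> parent_edge z \<notin> F}"

definition branch :: "'a set set \<Rightarrow> 'a \<Rightarrow> 'a set" where
  "branch F z = {v \<in> U. (adj F)\<^sup>*\<^sup>* z v}"

lemma branch_self: "z \<in> U \<Longrightarrow> z \<in> branch F z"
  by (simp add: branch_def)

lemma branch_subset: "branch F z \<subseteq> U"
  by (auto simp: branch_def)

lemma finite_branch: "finite (branch F z)"
  using graph branch_subset by (auto simp: graph_def intro: finite_subset)

lemma top_below_branch:
  assumes F: "F \<subseteq> T" and z: "z \<in> tops F" "z \<noteq> r" and zv: "(adj F)\<^sup>*\<^sup>* z v" "v \<noteq> z"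
  shows "depth z < depth v"
proof (rule ccontr)
  assume "\<not> depth z < depth v"
  then have "depth v \<le> depth z" by simp
  let ?p = "parent z"
  have "z \<in> U" "parent_edge z \<notin> F" using z by (auto simp: tops_def)
  then have "v \<in> U" using adj_rtranclp_in_vertices[OF zv(1) F] by blast
  have pz: "adj T ?p z" "depth ?p < depth z" using parent \<open>z \<in> U\<close> z(2) by auto
  then have "?p \<in> U" "?p \<noteq> z" using adj_in_vertices by (auto simp: adj_def)
  have "(adj {e \<in> T. z \<notin> e})\<^sup>*\<^sup>* r v"
    using root_path_avoiding[OF \<open>v \<in> U\<close> _ \<open>depth v \<le> depth z\<close>] zv(2) by simp
  then have rv: "(adj (T - {parent_edge z}))\<^sup>*\<^sup>* r v"
    by (simp add: adj_rtranclp_avoiding_vertex parent_edge_def)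
  have "(adj {e \<in> T. z \<notin> e})\<^sup>*\<^sup>* r ?p"
    using root_path_avoiding[OF \<open>?p \<in> U\<close>] \<open>?p \<noteq> z\<close> pz(2) by simp
  then have rp: "(adj (T - {parent_edge z}))\<^sup>*\<^sup>* r ?p"
    by (simp add: adj_rtranclp_avoiding_vertex parent_edge_def)
  have "(adj (T - {parent_edge z}))\<^sup>*\<^sup>* z v"
    using F \<open>parent_edge z \<notin> F\<close> by (intro adj_rtranclp_mono[OF _ zv(1)]) blast
  then have "(adj (T - {parent_edge z}))\<^sup>*\<^sup>* z ?p"
    using rtranclp_trans[OF rtranclp_trans[OF _ adj_rtranclp_sym[OF rv]] rp] by blast
  then have "(adj (T - {{?p, z}}))\<^sup>*\<^sup>* z ?p" by (simp add: parent_edge_def insert_commute)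
  moreover have "{?p, z} \<in> T" using pz(1) by (simp add: adj_def)
  ultimately show False using acyclic_edges_no_detour[OF acyclic _ \<open>?p \<noteq> z\<close>] by blast
qed

lemma branches_disjoint:
  assumes "F \<subseteq> T" and z: "z1 \<in> tops F" "z2 \<in> tops F" "z1 \<noteq> z2"
  shows "branch F z1 \<inter> branch F z2 = {}"
proof (rule ccontr)
  assume "branch F z1 \<inter> branch F z2 \<noteq> {}"
  then obtain v where "(adj F)\<^sup>*\<^sup>* z1 v" "(adj F)\<^sup>*\<^sup>* z2 v" by (auto simp: branch_def)
  then have "(adj F)\<^sup>*\<^sup>* z1 z2" "(adj F)\<^sup>*\<^sup>* z2 z1"
    by (metis adj_rtranclp_sym rtranclp_trans)+
  then have "z1 \<noteq> r \<Longrightarrow> depth z1 < depth z2" "z2 \<noteq> r \<Longrightarrow> depth z2 < depth z1"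
    using top_below_branch[OF assms(1)] z by auto
  then show False using z(3) depth_root by (cases "z1 = r"; cases "z2 = r") auto
qed

lemma branches_cover:
  assumes "F \<subseteq> T" "u \<in> U"
  shows "\<exists>z \<in> tops F. u \<in> branch F z"
  using assms(2)
proof (induction "depth u" arbitrary: u rule: less_induct)
  case less
  show ?case
  proof (cases "u \<in> tops F")
    case True
    then show ?thesis using less.prems branch_self by blast
  next
    case False
    then have "u \<noteq> r" "parent_edge u \<in> F" using less.prems by (auto simp: tops_def)
    have p: "adj T (parent u) u" "depth (parent u) < depth u" using parent less.prems \<open>u \<noteq> r\<close> by auto
    then obtain z where z: "z \<in> tops F" "parent u \<in> branch F z"
      using less.hyps adj_in_vertices by blast
    have "adj F (parent u) u"
      using p(1) \<open>parent_edge u \<in> F\<close> by (auto simp: adj_def parent_edge_def insert_commute)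
    then have "u \<in> branch F z"
      using z(2) less.prems by (auto simp: branch_def intro: rtranclp.rtrancl_into_rtrancl)
    then show ?thesis using z(1) by blast
  qed
qed

end

section \<open>Matching and averaging over thresholds\<close>

lemma half_card_le_sum_matched:
  fixes g :: "'a \<Rightarrow> real"
  assumes "finite P" and "D \<subseteq> P" and "inj_on c D" and "c ` D \<subseteq> P - D"
    and matched: "\<And>z. z \<in> D \<Longrightarrow> 1 \<le> g z + g (c z)"
    and unmatched: "\<And>z. z \<in> P - D - c ` D \<Longrightarrow> 1/2 \<le> g z"
  shows "real (card P) / 2 \<le> sum g P"
proof -
  define R where "R = P - D - c ` D"
  have P: "P = D \<union> c ` D \<union> R" and disj: "D \<inter> c ` D = {}" "(D \<union> c ` D) \<inter> R = {}"
    using assms(2,4) by (auto simp: R_def)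
  have fin: "finite D" "finite (c ` D)" "finite R"
    using assms(1,2) finite_subset by (auto simp: R_def)
  have "real (card D) \<le> sum g D + sum g (c ` D)"
  proof -
    have "real (card D) = (\<Sum>z\<in>D. 1)" by simp
    also have "\<dots> \<le> (\<Sum>z\<in>D. g z + g (c z))" using matched by (rule sum_mono)
    also have "\<dots> = sum g D + sum g (c ` D)" using assms(3) by (simp add: sum.distrib sum.reindex)
    finally show ?thesis .
  qed
  moreover have "real (card R) / 2 \<le> sum g R"
    using sum_mono[of R "\<lambda>_. 1/2" g] unmatched by (simp add: R_def)
  moreover have "card P = 2 * card D + card R"
    using fin disj assms(3) unfolding P by (simp add: card_Un_disjoint card_image)
  moreover have "sum g P = sum g D + sum g (c ` D) + sum g R"
    using fin disj unfolding P by (simp add: sum.union_disjoint)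
  ultimately show ?thesis by simp
qed

lemma has_integral_threshold:
  fixes a :: real
  assumes "0 \<le> a" "a \<le> 1"
  shows "((\<lambda>t. if a < t then 1 else 0) has_integral (1 - a)) {0..1}"
proof -
  have lower: "((\<lambda>t. if a < t then 1 else 0) has_integral 0) {0..a}"
    by (rule has_integral_spike_finite[where S="{}", OF _ _ has_integral_0]) auto
  have "((\<lambda>t. 1) has_integral (1 - a)) {a..1}"
    using has_integral_const_real[of "1::real" a 1] assms(2) by simp
  then have upper: "((\<lambda>t. if a < t then 1 else 0) has_integral (1 - a)) {a..1}"
    by (rule has_integral_spike_finite[where S="{a}", rotated 2]) auto
  show ?thesis using has_integral_combine[OF assms lower upper] by simp
qed

lemma has_integral_threshold_sum:
  fixes w c :: "'e \<Rightarrow> real"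
  assumes "finite S" "\<forall>e\<in>S. 0 \<le> w e \<and> w e \<le> 1"
  shows "((\<lambda>t. \<Sum>e\<in>S. c e * (if w e < t then 1 else 0)) has_integral (\<Sum>e\<in>S. c e * (1 - w e))) {0..1}"
  using assms by (intro has_integral_sum has_integral_mult_right has_integral_threshold) auto

section \<open>The bound for one component\<close>

text \<open>Only feasibility of (x, y) is needed, and C may be any vertex set with any set of edges
inside it.\<close>

locale fc_tree_bound =
  fixes V :: "'a set" and E :: "'a set set" and x :: "'a \<Rightarrow> real" and y :: "'a set \<Rightarrow> real"
    and w :: "'a set \<Rightarrow> real" and VC :: "'a set" and EC :: "'a set set" and M :: "'a set set"
    and r :: 'a
  assumes graph_VE: "graph V E" and feasible: "fc_feasible V E x y"
    and VC_subset: "VC \<subseteq> V" and EC_subset: "EC \<subseteq> induced_edges E VC"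
    and weights: "\<forall>e\<in>EC. 0 \<le> w e \<and> w e \<le> 1"
    and mst: "min_spanning_tree VC EC w M"
    and root_VC: "r \<in> VC" and root_half: "1/2 \<le> x r"
begin

lemma finite_VC: "finite VC"
  using VC_subset graph_VE by (auto simp: graph_def intro: finite_subset)

lemma EC_edge: "e \<in> EC \<Longrightarrow> e \<in> E \<and> e \<subseteq> VC \<and> (\<exists>i j. i \<noteq> j \<and> e = {i, j})"
  using EC_subset graph_VE unfolding induced_edges_def graph_def by blast

lemma finite_EC: "finite EC"
proof -
  have "EC \<subseteq> Pow VC" using EC_edge by blast
  then show ?thesis using finite_VC by (auto intro: finite_subset)
qed

lemma M_subset_EC: "M \<subseteq> EC"
  using mst by (simp add: min_spanning_tree_def spanning_tree_def)

lemma x_nonneg: "i \<in> VC \<Longrightarrow> 0 \<le> x i"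
  using feasible VC_subset by (auto simp: fc_feasible_def)

lemma y_nonneg: "e \<in> E \<Longrightarrow> 0 \<le> y e"
  using feasible by (simp add: fc_feasible_def)

lemma edge_constraint: "{i, j} \<in> E \<Longrightarrow> 1 \<le> x i + x j"
  using feasible by (simp add: fc_feasible_def)

lemma set_constraint:
  "S \<subseteq> VC \<Longrightarrow> induced_edges E S \<noteq> {} \<Longrightarrow> 1 \<le> (\<Sum>i\<in>S. x i) - (\<Sum>e\<in>induced_edges E S. y e)"
  using feasible VC_subset by (simp add: fc_feasible_def)

lemma set_constraint_le:
  assumes "S \<subseteq> VC" "induced_edges E S \<noteq> {}" "F \<subseteq> induced_edges E S"
  shows "1 \<le> (\<Sum>i\<in>S. x i) - (\<Sum>e\<in>F. y e)"
proof -
  have "finite E" using graph_VE by (auto simp: graph_def intro: finite_subset[of E "Pow V"])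
  then have "(\<Sum>e\<in>F. y e) \<le> (\<Sum>e\<in>induced_edges E S. y e)"
    using assms(3) y_nonneg by (intro sum_mono2) (auto simp: induced_edges_def)
  then show ?thesis using set_constraint[OF assms(1,2)] by simp
qed

sublocale rooted_tree VC M r
proof
  show "graph VC M" using finite_VC M_subset_EC EC_edge by (fastforce simp: graph_def)
  show "connected_on VC M" "acyclic_edges M"
    using mst by (simp_all add: min_spanning_tree_def spanning_tree_def)
qed (rule root_VC)

definition L :: "'a set" where
  "L = {i \<in> VC. degree M i = 1 \<and> x i < 1/2}"

definition VT :: "'a set" where
  "VT = VC - L"

definition ET :: "'a set set" where
  "ET = {e \<in> M. e \<inter> L = {}}"

definition light :: "real \<Rightarrow> 'a set set" where
  "light t = {e \<in> M. w e < t}"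

definition branch_value :: "real \<Rightarrow> 'a \<Rightarrow> real" where
  "branch_value t z = (\<Sum>i\<in>branch (light t) z. x i) - (\<Sum>e\<in>{e \<in> EC. w e < t \<and> e \<subseteq> branch (light t) z}. y e)"

lemma light_subset: "light t \<subseteq> M"
  by (auto simp: light_def)

lemma tops_light: "tops (light t) = {z \<in> VC. z = r \<or> t \<le> w (parent_edge z)}"
  using parent_edge_in_tree by (auto simp: tops_def light_def)

lemma light_edge_in_branch:
  assumes "e \<in> EC" "w e < t"
  shows "\<exists>z \<in> tops (light t). e \<subseteq> branch (light t) z"
proof -
  obtain u v where uv: "u \<noteq> v" "e = {u, v}" "u \<in> VC" "v \<in> VC" using EC_edge[OF assms(1)] by blast
  have "(adj (light t))\<^sup>*\<^sup>* u v"
    unfolding light_def using weights finite_EC EC_edge assms uv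
    by (intro min_spanning_tree_cycle_property[OF mst]) auto
  moreover obtain z where "z \<in> tops (light t)" "u \<in> branch (light t) z"
    using branches_cover[OF light_subset uv(3)] by blast
  ultimately show ?thesis using uv by (auto simp: branch_def intro: rtranclp_trans)
qed

lemma sum_branch_value_le:
  "(\<Sum>z\<in>tops (light t). branch_value t z) \<le> (\<Sum>i\<in>VC. x i) - (\<Sum>e\<in>{e \<in> EC. w e < t}. y e)"
proof -
  let ?B = "branch (light t)" and ?Z = "tops (light t)"
  let ?Eb = "\<lambda>z. {e \<in> EC. w e < t \<and> e \<subseteq> ?B z}"
  have finZ: "finite ?Z" using finite_VC by (simp add: tops_def)
  have disj: "?B z1 \<inter> ?B z2 = {}" if "z1 \<in> ?Z" "z2 \<in> ?Z" "z1 \<noteq> z2" for z1 z2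
    using branches_disjoint[OF light_subset that] .
  have "(\<Sum>z\<in>?Z. \<Sum>i\<in>?B z. x i) = (\<Sum>i\<in>(\<Union>z\<in>?Z. ?B z). x i)"
    using disj finite_branch by (intro sum.UNION_disjoint[symmetric] finZ) blast+
  also have "\<dots> \<le> (\<Sum>i\<in>VC. x i)"
    using branch_subset x_nonneg finite_VC by (intro sum_mono2) auto
  finally have xs: "(\<Sum>z\<in>?Z. \<Sum>i\<in>?B z. x i) \<le> (\<Sum>i\<in>VC. x i)" .
  have "?Eb z1 \<inter> ?Eb z2 = {}" if "z1 \<in> ?Z" "z2 \<in> ?Z" "z1 \<noteq> z2" for z1 z2
  proof -
    have "?B z1 \<inter> ?B z2 = {}" using disj that .
    then have "e = {}" if "e \<subseteq> ?B z1" "e \<subseteq> ?B z2" for e using that by blast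
    then show ?thesis using EC_edge by blast
  qed
  moreover have "(\<Union>z\<in>?Z. ?Eb z) = {e \<in> EC. w e < t}"
    using light_edge_in_branch by auto
  ultimately have ys: "(\<Sum>z\<in>?Z. \<Sum>e\<in>?Eb z. y e) = (\<Sum>e\<in>{e \<in> EC. w e < t}. y e)"
    using sum.UNION_disjoint[OF finZ, of ?Eb y] finite_EC by simp
  show ?thesis using xs ys by (simp add: branch_value_def sum_subtractf)
qed

lemma branch_value_singleton: "branch (light t) z = {z} \<Longrightarrow> branch_value t z = x z"
proof -
  assume single: "branch (light t) z = {z}"
  have empty: "{e \<in> EC. w e < t \<and> e \<subseteq> {z}} = {}" using EC_edge by fastforce
  show ?thesis unfolding branch_value_def single empty by simp
qed

lemma one_le_branch_value:
  assumes "z \<in> VC" "branch (light t) z \<noteq> {z}"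
  shows "1 \<le> branch_value t z"
proof -
  let ?B = "branch (light t) z"
  obtain v where "v \<in> ?B" "v \<noteq> z" using assms branch_self by blast
  then obtain c where zc: "adj (light t) z c"
    by (auto simp: branch_def elim: converse_rtranclpE)
  have "adj M z c" using adj_mono[OF light_subset zc] .
  then have "{z, c} \<in> E" "c \<in> VC" using M_subset_EC EC_edge adj_in_vertices by (auto simp: adj_def)
  then have "{z, c} \<in> E" "c \<in> ?B" "z \<in> ?B"
    using zc assms(1) by (auto simp: branch_def)
  then have "induced_edges E ?B \<noteq> {}" by (auto simp: induced_edges_def)
  then show ?thesis unfolding branch_value_def
    using EC_edge branch_subset by (intro set_constraint_le) (auto simp: induced_edges_def)
qed

lemma branch_value_nonneg: "z \<in> VC \<Longrightarrow> 0 \<le> branch_value t z"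
  using one_le_branch_value[of z t] branch_value_singleton[of t z] x_nonneg[of z]
  by (cases "branch (light t) z = {z}") simp_all

definition lonely :: "real \<Rightarrow> 'a set" where
  "lonely t = {z \<in> tops (light t) - L. branch (light t) z = {z} \<and> x z < 1/2}"

lemma lonely_child:
  assumes z: "z \<in> lonely t" and zc: "adj M z c" "depth z < depth c"
  shows "c \<in> tops (light t) - L - lonely t" and "parent c = z"
    and "1 \<le> branch_value t z + branch_value t c"
proof -
  have zVC: "z \<in> VC" and single: "branch (light t) z = {z}" and "x z < 1/2"
    and ztop: "z \<in> tops (light t)"
    using z by (auto simp: lonely_def tops_def)
  show pc: "parent c = z" using parent_unique[OF zc] .
  have "c \<in> VC" "c \<noteq> z" using zc adj_in_vertices by (auto simp: adj_def)
  have "{z, c} \<in> E" using zc(1) M_subset_EC EC_edge by (auto simp: adj_def)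
  then have "1/2 < x c" using edge_constraint \<open>x z < 1/2\<close> by fastforce
  have ctop: "c \<in> tops (light t)"
  proof (rule ccontr)
    assume "c \<notin> tops (light t)"
    then have "parent_edge c \<in> light t" using \<open>c \<in> VC\<close> by (auto simp: tops_def)
    then have "adj (light t) z c"
      using pc \<open>c \<noteq> z\<close> by (auto simp: parent_edge_def adj_def insert_commute)
    then have "c \<in> branch (light t) z" using \<open>c \<in> VC\<close> by (auto simp: branch_def)
    then show False using single \<open>c \<noteq> z\<close> by simp
  qed
  then show "c \<in> tops (light t) - L - lonely t"
    using \<open>1/2 < x c\<close> by (auto simp: L_def lonely_def)
  let ?Bc = "branch (light t) c"
  have "z \<notin> ?Bc"
    using branches_disjoint[OF light_subset ztop ctop] \<open>c \<noteq> z\<close> branch_self[OF zVC] by auto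
  have "1 \<le> (\<Sum>i\<in>insert z ?Bc. x i) - (\<Sum>e\<in>{e \<in> EC. w e < t \<and> e \<subseteq> ?Bc}. y e)"
  proof (rule set_constraint_le)
    show "insert z ?Bc \<subseteq> VC" using zVC branch_subset by auto
    show "induced_edges E (insert z ?Bc) \<noteq> {}"
      using \<open>{z, c} \<in> E\<close> branch_self[OF \<open>c \<in> VC\<close>] by (auto simp: induced_edges_def)
    show "{e \<in> EC. w e < t \<and> e \<subseteq> ?Bc} \<subseteq> induced_edges E (insert z ?Bc)"
      using EC_edge by (auto simp: induced_edges_def)
  qed
  moreover have "branch_value t c = (\<Sum>i\<in>?Bc. x i) - (\<Sum>e\<in>{e \<in> EC. w e < t \<and> e \<subseteq> ?Bc}. y e)"
    by (simp add: branch_value_def)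
  ultimately show "1 \<le> branch_value t z + branch_value t c"
    using \<open>z \<notin> ?Bc\<close> finite_branch branch_value_singleton[OF single] by simp
qed

lemma half_card_le_sum_branch_value:
  "real (card (tops (light t) - L)) / 2 \<le> (\<Sum>z\<in>tops (light t). branch_value t z)"
proof -
  have "\<exists>c. adj M z c \<and> depth z < depth c" if "z \<in> lonely t" for z
  proof -
    have "z \<in> VC" "z \<noteq> r" "degree M z \<noteq> 1"
      using that root_half by (auto simp: lonely_def tops_def L_def)
    then show ?thesis using child_exists by metis
  qed
  then obtain ch where ch: "\<And>z. z \<in> lonely t \<Longrightarrow> adj M z (ch z) \<and> depth z < depth (ch z)"
    by metis
  have fin: "finite (tops (light t))" using finite_VC by (simp add: tops_def)
  have "real (card (tops (light t) - L)) / 2 \<le> (\<Sum>z\<in>tops (light t) - L. branch_value t z)"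
  proof (rule half_card_le_sum_matched)
    show "finite (tops (light t) - L)" using fin by simp
    show "lonely t \<subseteq> tops (light t) - L" by (auto simp: lonely_def)
    show "inj_on ch (lonely t)" using lonely_child(2) ch by (metis inj_onI)
    show "ch ` lonely t \<subseteq> tops (light t) - L - lonely t" using lonely_child(1) ch by blast
    show "1 \<le> branch_value t z + branch_value t (ch z)" if "z \<in> lonely t" for z
      using lonely_child(3) ch that by blast
    show "1/2 \<le> branch_value t z" if "z \<in> tops (light t) - L - lonely t - ch ` lonely t" for z
    proof (cases "branch (light t) z = {z}")
      case True
      then show ?thesis using that by (auto simp: lonely_def branch_value_singleton)
    next
      case False
      moreover have "z \<in> VC" using that by (auto simp: tops_def)
      ultimately show ?thesis using one_le_branch_value by fastforce
    qed
  qed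
  also have "\<dots> \<le> (\<Sum>z\<in>tops (light t). branch_value t z)"
    using fin branch_value_nonneg by (intro sum_mono2) (auto simp: tops_def)
  finally show ?thesis .
qed

lemma parent_edge_in_ET:
  assumes "z \<in> VC" "z \<noteq> r" "z \<notin> L"
  shows "parent_edge z \<in> ET"
proof -
  have "parent z \<notin> L"
  proof (cases "parent z = r")
    case True
    then show ?thesis using root_half by (simp add: L_def)
  next
    case False
    then show ?thesis using degree_parent[OF assms(1,2)] by (simp add: L_def)
  qed
  then show ?thesis using parent_edge_in_tree[OF assms(1,2)] assms(3) by (auto simp: ET_def parent_edge_def)
qed

lemma card_VT_le:
  "real (card VT) - real (card {e \<in> ET. w e < t}) \<le> real (card (tops (light t) - L))"
proof -
  define heavy where "heavy = {z \<in> VT - {r}. t \<le> w (parent_edge z)}"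
  define lighter where "lighter = {z \<in> VT - {r}. w (parent_edge z) < t}"
  have finVT: "finite VT" using finite_VC by (simp add: VT_def)
  have fin: "finite heavy" "finite lighter" using finVT by (simp_all add: heavy_def lighter_def)
  have "r \<in> VT" using root_VC root_half by (simp add: VT_def L_def)
  have "VT = insert r (heavy \<union> lighter)" using \<open>r \<in> VT\<close> by (auto simp: heavy_def lighter_def)
  moreover have "r \<notin> heavy \<union> lighter" "heavy \<inter> lighter = {}" by (auto simp: heavy_def lighter_def)
  ultimately have "card VT = Suc (card heavy + card lighter)"
    using fin by (simp add: card_Un_disjoint)
  moreover have "Suc (card heavy) \<le> card (tops (light t) - L)"
  proof -
    have "insert r heavy \<subseteq> tops (light t) - L"
      using root_VC root_half by (auto simp: tops_light heavy_def VT_def L_def)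
    moreover have "finite (tops (light t) - L)" using finite_VC by (simp add: tops_def)
    ultimately have "card (insert r heavy) \<le> card (tops (light t) - L)" by (rule card_mono[rotated])
    then show ?thesis using fin(1) \<open>r \<notin> heavy \<union> lighter\<close> by simp
  qed
  moreover have "card lighter \<le> card {e \<in> ET. w e < t}"
  proof (rule card_inj_on_le)
    show "inj_on parent_edge lighter"
      by (rule inj_on_subset[OF inj_on_parent_edge]) (auto simp: lighter_def VT_def)
    show "parent_edge ` lighter \<subseteq> {e \<in> ET. w e < t}"
      using parent_edge_in_ET by (auto simp: lighter_def VT_def)
    show "finite {e \<in> ET. w e < t}" using finite_edges by (simp add: ET_def)
  qed
  ultimately show ?thesis by simp
qed

lemma threshold_bound:
  "real (card VT) - (\<Sum>e\<in>ET. if w e < t then 1 else 0)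
     \<le> 2 * ((\<Sum>i\<in>VC. x i) - (\<Sum>e\<in>EC. y e * (if w e < t then 1 else 0)))"
proof -
  have "real (card {e \<in> ET. w e < t}) = (\<Sum>e\<in>ET. if w e < t then 1 else 0)"
    using finite_edges by (simp add: ET_def sum.inter_filter[symmetric])
  moreover have "(\<Sum>e\<in>{e \<in> EC. w e < t}. y e) = (\<Sum>e\<in>EC. y e * (if w e < t then 1 else 0))"
    using finite_EC by (simp add: sum.inter_filter if_distrib cong: if_cong)
  ultimately show ?thesis
    using card_VT_le[of t] half_card_le_sum_branch_value[of t] sum_branch_value_le[of t] by simp
qed

lemma forest_cover_tree_bound:
  "(1/2) * (real (card VT) - (\<Sum>e\<in>ET. 1 - w e)) \<le> (\<Sum>i\<in>VC. x i) - (\<Sum>e\<in>EC. y e * (1 - w e))"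
proof -
  have ET: "finite ET" "\<forall>e\<in>ET. 0 \<le> w e \<and> w e \<le> 1"
    using finite_edges M_subset_EC weights by (auto simp: ET_def)
  have const: "((\<lambda>t. c) has_integral c) {0..1::real}" for c :: real
    using has_integral_const_real[of c 0 1] by simp
  have "((\<lambda>t. real (card VT) - (\<Sum>e\<in>ET. 1 * (if w e < t then 1 else 0)))
      has_integral (real (card VT) - (\<Sum>e\<in>ET. 1 * (1 - w e)))) {0..1}"
    using ET by (intro has_integral_diff const has_integral_threshold_sum)
  moreover have "((\<lambda>t. 2 * ((\<Sum>i\<in>VC. x i) - (\<Sum>e\<in>EC. y e * (if w e < t then 1 else 0))))
      has_integral (2 * ((\<Sum>i\<in>VC. x i) - (\<Sum>e\<in>EC. y e * (1 - w e))))) {0..1}"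
    using finite_EC weights
    by (intro has_integral_mult_right has_integral_diff const has_integral_threshold_sum)
  ultimately have "real (card VT) - (\<Sum>e\<in>ET. 1 * (1 - w e))
      \<le> 2 * ((\<Sum>i\<in>VC. x i) - (\<Sum>e\<in>EC. y e * (1 - w e)))"
    by (rule has_integral_le) (use threshold_bound in simp)
  then show ?thesis by simp
qed

end

theorem mainTheorem8:
  fixes V :: "'a set" and E :: "'a set set" and w :: "'a set \<Rightarrow> real"
    and x :: "'a \<Rightarrow> real" and y :: "'a set \<Rightarrow> real"
    and VC :: "'a set" and M :: "'a set set"
  assumes G: "graph V E"
    and w01: "\<forall>e\<in>E. 0 \<le> w e \<and> w e \<le> 1"
    and opt: "fc_optimal V E w x y"
    and comp: "connected_comp {i \<in> V. x i > 0} {e \<in> E. y e > 0} VC"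
    and hasedge: "induced_edges {e \<in> E. y e > 0} VC \<noteq> {}"
    and mst: "min_spanning_tree VC (induced_edges {e \<in> E. y e > 0} VC) w M"
  shows "(let EC = induced_edges {e \<in> E. y e > 0} VC;
              L = {i \<in> VC. degree M i = 1 \<and> x i < 1/2};
              VT = VC - L;
              ET = {e \<in> M. e \<inter> L = {}}
          in (\<Sum>i\<in>VC. x i) - (\<Sum>e\<in>EC. y e * (1 - w e))
             \<ge> (1/2) * (real (card VT) - (\<Sum>e\<in>ET. 1 - w e)))"
proof -
  let ?EC = "induced_edges {e \<in> E. y e > 0} VC"
  have feasible: "fc_feasible V E x y" using opt by (simp add: fc_optimal_def)
  have "VC \<subseteq> V" using comp by (auto simp: connected_comp_def)
  obtain e where "e \<in> E" "e \<subseteq> VC" using hasedge by (auto simp: induced_edges_def)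
  moreover obtain i j where "e = {i, j}" using G \<open>e \<in> E\<close> by (auto simp: graph_def)
  ultimately have "{i, j} \<in> E" "i \<in> VC" "j \<in> VC" by auto
  moreover have "1 \<le> x i + x j" using feasible \<open>{i, j} \<in> E\<close> by (simp add: fc_feasible_def)
  then have "1/2 \<le> x i \<or> 1/2 \<le> x j" by linarith
  ultimately obtain r where "r \<in> VC" "1/2 \<le> x r" by blast
  then interpret fc_tree_bound V E x y w VC ?EC M r
  proof unfold_locales
    show "\<forall>e\<in>?EC. 0 \<le> w e \<and> w e \<le> 1" using w01 by (simp add: induced_edges_def)
    show "?EC \<subseteq> induced_edges E VC" by (auto simp: induced_edges_def)
  qed (use G feasible \<open>VC \<subseteq> V\<close> mst in simp_all)
  show ?thesis using forest_cover_tree_bound by (simp add: Let_def L_def VT_def ET_def)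
qed

end
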